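(* Let $A_1,\dots,A_m\in\mathbb{S}^n$, $b\in\mathbb{R}^m$, $C\in\mathbb{S}^n$. Let $X\in\mathcal{C}$ be a global optimum of (SDP) and assume strong duality holds, i.e., the dual problem $\max_{\nu\in\mathbb{R}^m}\langle b,\nu\rangle$ subject to $C-\mathcal{A}^*(\nu)\succeq0$ has an optimal solution $\nu$ with $\langle b,\nu\rangle=\langle C,X\rangle$. Let Assumption 1(a) hold with $p=\operatorname{rank}(X)$. Then, writing $X=YY^\top$ with $Y\in\mathbb{R}^{n\times p}$ and $S=S(Y)$, we have $S\succeq0$ and $\langle S,X\rangle=0$.
   Context: $\mathbb{S}^n$: real symmetric $n\times n$ matrices; $\langle U,V\rangle=\operatorname{tr}(U^\top V)$. $\mathcal{A}(X)_i=\langle A_i,X\rangle$, $\mathcal{A}^*(\nu)=\sum_i\nu_iA_i$. $\mathcal{C}=\{X\in\mathbb{S}^n:\mathcal{A}(X)=b,\ X\succeq0\}$; (SDP): minimize $\langle C,X\rangle$ over $\mathcal{C}$. $\mathcal{M}_p=\{Y\in\mathbb{R}^{n\times p}:\mathcal{A}(YY^\top)=b\}$. Assumption 1(a) for $p$: $A_1Y,\dots,A_mY$ are linearly independent in $\mathbb{R}^{n\times p}$ for all $Y\in\mathcal{M}_p$. For $Y\in\mathcal{M}_p$: $G_{ij}=\langle A_iY,A_jY\rangle$, $\mu=G^\dagger\mathcal{A}(CYY^\top)$ (Moore–Penrose pseudo-inverse), and $S(Y)=C-\mathcal{A}^*(\mu)$; this depends on $Y$ only through $YY^\top$. *)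

theory Defs
  imports "Jordan_Normal_Form.Matrix" "Jordan_Normal_Form.DL_Rank"
begin

definition frob :: "real mat \<Rightarrow> real mat \<Rightarrow> real" where
  "frob U V = (\<Sum>i<dim_row U. \<Sum>j<dim_col U. U $$ (i,j) * V $$ (i,j))"

definition sym_mat :: "nat \<Rightarrow> real mat \<Rightarrow> bool" where
  "sym_mat n M \<longleftrightarrow> M \<in> carrier_mat n n \<and> transpose_mat M = M"

definition psd :: "nat \<Rightarrow> real mat \<Rightarrow> bool" where
  "psd n M \<longleftrightarrow> sym_mat n M \<and> (\<forall>v \<in> carrier_vec n. v \<bullet> (M *\<^sub>v v) \<ge> 0)"

definition Aop :: "nat \<Rightarrow> (nat \<Rightarrow> real mat) \<Rightarrow> real mat \<Rightarrow> real vec" where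
  "Aop m A X = vec m (\<lambda>i. frob (A i) X)"

definition Astar :: "nat \<Rightarrow> nat \<Rightarrow> (nat \<Rightarrow> real mat) \<Rightarrow> real vec \<Rightarrow> real mat" where
  "Astar n m A \<nu> = mat n n (\<lambda>(j,k). \<Sum>i<m. \<nu> $ i * A i $$ (j,k))"

definition feasible :: "nat \<Rightarrow> nat \<Rightarrow> (nat \<Rightarrow> real mat) \<Rightarrow> real vec \<Rightarrow> real mat \<Rightarrow> bool" where
  "feasible n m A b X \<longleftrightarrow> psd n X \<and> Aop m A X = b"

definition dual_feasible :: "nat \<Rightarrow> nat \<Rightarrow> (nat \<Rightarrow> real mat) \<Rightarrow> real mat \<Rightarrow> real vec \<Rightarrow> bool" where
  "dual_feasible n m A C \<nu> \<longleftrightarrow> \<nu> \<in> carrier_vec m \<and> psd n (C - Astar n m A \<nu>)"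

definition pinv :: "real mat \<Rightarrow> real mat" where
  "pinv M = (THE P. P \<in> carrier_mat (dim_col M) (dim_row M) \<and>
       M * P * M = M \<and> P * M * P = P \<and>
       transpose_mat (M * P) = M * P \<and> transpose_mat (P * M) = P * M)"

definition lin_indep_mats :: "nat \<Rightarrow> nat \<Rightarrow> nat \<Rightarrow> (nat \<Rightarrow> real mat) \<Rightarrow> bool" where
  "lin_indep_mats m r c B \<longleftrightarrow>
     (\<forall>\<gamma> :: nat \<Rightarrow> real. (\<forall>j<r. \<forall>k<c. (\<Sum>i<m. \<gamma> i * B i $$ (j,k)) = 0) \<longrightarrow> (\<forall>i<m. \<gamma> i = 0))"

definition assumption1a :: "nat \<Rightarrow> nat \<Rightarrow> (nat \<Rightarrow> real mat) \<Rightarrow> real vec \<Rightarrow> nat \<Rightarrow> bool" where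
  "assumption1a n m A b p \<longleftrightarrow>
     (\<forall>Y \<in> carrier_mat n p. Aop m A (Y * transpose_mat Y) = b \<longrightarrow>
        lin_indep_mats m n p (\<lambda>i. A i * Y))"

definition gram :: "nat \<Rightarrow> (nat \<Rightarrow> real mat) \<Rightarrow> real mat \<Rightarrow> real mat" where
  "gram m A Y = mat m m (\<lambda>(i,j). frob (A i * Y) (A j * Y))"

definition mu :: "nat \<Rightarrow> (nat \<Rightarrow> real mat) \<Rightarrow> real mat \<Rightarrow> real mat \<Rightarrow> real vec" where
  "mu m A C Y = pinv (gram m A Y) *\<^sub>v Aop m A (C * Y * transpose_mat Y)"

definition Smat :: "nat \<Rightarrow> nat \<Rightarrow> (nat \<Rightarrow> real mat) \<Rightarrow> real mat \<Rightarrow> real mat \<Rightarrow> real mat" where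
  "Smat n m A C Y = C - Astar n m A (mu m A C Y)"

end

(* Take a dual feasible nu with <b, nu> = <C, X>. The slack matrix S = C - A^*(nu) is psd and
   <S, X> = <C, X> - <b, nu> = 0, and for psd S and X = Y Y^T this forces S Y = 0, i.e.
   C Y = sum_i nu_i A_i Y. Pairing with A_j Y gives A(C Y Y^T) = G nu for the Gram matrix G of
   A_1 Y, ..., A_m Y, which is invertible by Assumption 1(a); hence mu = G^+ A(C Y Y^T) = nu and
   S(Y) = S. A factor Y with exactly rank X columns comes from a pivoted Cholesky factorisation
   X = Z Z^T: the pivot rows of Z form a triangular block with nonzero diagonal, so Z has at most
   rank X columns, and zero columns pad it to rank X. *)
theory Submission
  imports Defs
begin

lemma index_mult_transpose_mat:
  assumes "A \<in> carrier_mat r k" "B \<in> carrier_mat s k" "a < r" "b < s"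
  shows "(A * transpose_mat B) $$ (a, b) = (\<Sum>l<k. A $$ (a, l) * B $$ (b, l))"
  using assms by (simp add: scalar_prod_def atLeast0LessThan)

lemma mult_mat_unit_vec:
  fixes M :: "'a :: semiring_1 mat"
  assumes "M \<in> carrier_mat r n" "i < n"
  shows "M *\<^sub>v unit_vec n i = col M i"
  using assms by (intro eq_vecI) auto

lemma quadratic_form_unit_vec:
  fixes M :: "'a :: semiring_1 mat"
  assumes "M \<in> carrier_mat n n" "i < n"
  shows "unit_vec n i \<bullet> (M *\<^sub>v unit_vec n i) = M $$ (i, i)"
  using assms by (simp add: mult_mat_unit_vec scalar_prod_left_unit[of _ n])

lemma minus_mat_eq_0_iff:
  fixes A B :: "'a :: group_add mat"
  assumes A: "A \<in> carrier_mat r c" and B: "B \<in> carrier_mat r c"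
  shows "A - B = 0\<^sub>m r c \<longleftrightarrow> A = B"
proof
  assume AB: "A - B = 0\<^sub>m r c"
  show "A = B"
  proof (rule eq_matI)
    fix i j assume i: "i < dim_row B" and j: "j < dim_col B"
    then have "(A - B) $$ (i, j) = 0" using B AB by simp
    then show "A $$ (i, j) = B $$ (i, j)" using A B i j by simp
  qed (use A B in auto)
qed (use A in simp)

lemma sym_mat_index: "sym_mat n M \<Longrightarrow> a < n \<Longrightarrow> b < n \<Longrightarrow> M $$ (a, b) = M $$ (b, a)"
  unfolding sym_mat_def by (metis carrier_matD index_transpose_mat(1))

lemma frob_commute:
  assumes "U \<in> carrier_mat r c" "V \<in> carrier_mat r c"
  shows "frob U V = frob V U"
  using assms unfolding frob_def by (simp add: mult.commute)

lemma frob_diff_left: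
  assumes "U \<in> carrier_mat r c" "V \<in> carrier_mat r c"
  shows "frob (U - V) W = frob U W - frob V W"
  using assms unfolding frob_def by (simp add: left_diff_distrib sum_subtractf)

lemma frob_lincomb_right:
  assumes "U \<in> carrier_mat r c"
    and "\<And>a l. a < r \<Longrightarrow> l < c \<Longrightarrow> V $$ (a, l) = (\<Sum>i\<in>I. x i * W i $$ (a, l))"
  shows "frob U V = (\<Sum>i\<in>I. x i * frob U (W i))"
proof -
  have "frob U V = (\<Sum>a<r. \<Sum>l<c. \<Sum>i\<in>I. x i * (U $$ (a, l) * W i $$ (a, l)))"
    using assms unfolding frob_def by (simp add: sum_distrib_left ac_simps)
  also have "\<dots> = (\<Sum>a<r. \<Sum>i\<in>I. \<Sum>l<c. x i * (U $$ (a, l) * W i $$ (a, l)))"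
    by (intro sum.cong refl sum.swap)
  also have "\<dots> = (\<Sum>i\<in>I. \<Sum>a<r. \<Sum>l<c. x i * (U $$ (a, l) * W i $$ (a, l)))"
    by (rule sum.swap)
  also have "\<dots> = (\<Sum>i\<in>I. x i * frob U (W i))"
    using assms(1) unfolding frob_def by (simp add: sum_distrib_left)
  finally show ?thesis .
qed

lemma frob_self_eq_0:
  assumes M: "M \<in> carrier_mat r c" and "frob M M = 0"
  shows "M = 0\<^sub>m r c"
proof (rule eq_matI)
  have "(\<Sum>a<r. \<Sum>l<c. (M $$ (a, l))\<^sup>2) = 0"
    using assms unfolding frob_def by (simp add: power2_eq_square)
  then have "\<forall>a<r. \<forall>l<c. (M $$ (a, l))\<^sup>2 = 0"
    by (simp add: sum_nonneg_eq_0_iff sum_nonneg)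
  then show "M $$ (a, l) = 0\<^sub>m r c $$ (a, l)" if "a < dim_row (0\<^sub>m r c)" "l < dim_col (0\<^sub>m r c)" for a l
    using that by simp
qed (use M in auto)

lemma frob_mult_transpose_right:
  assumes A: "A \<in> carrier_mat r s" and B: "B \<in> carrier_mat r k" and Y: "Y \<in> carrier_mat s k"
  shows "frob A (B * transpose_mat Y) = frob (A * Y) B"
proof -
  have "frob A (B * transpose_mat Y) = (\<Sum>a<r. \<Sum>c<s. \<Sum>l<k. A $$ (a, c) * (B $$ (a, l) * Y $$ (c, l)))"
    unfolding frob_def using A B Y by (simp add: scalar_prod_def atLeast0LessThan sum_distrib_left)
  also have "\<dots> = (\<Sum>a<r. \<Sum>l<k. \<Sum>c<s. A $$ (a, c) * (B $$ (a, l) * Y $$ (c, l)))"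
    by (intro sum.cong refl sum.swap)
  also have "\<dots> = (\<Sum>a<r. \<Sum>l<k. (\<Sum>c<s. A $$ (a, c) * Y $$ (c, l)) * B $$ (a, l))"
    by (intro sum.cong refl) (simp add: sum_distrib_left sum_distrib_right ac_simps)
  also have "\<dots> = frob (A * Y) B"
    unfolding frob_def using A B Y by (simp add: scalar_prod_def atLeast0LessThan)
  finally show ?thesis .
qed

lemma frob_eq_sum_cols:
  assumes "U \<in> carrier_mat r c" "V \<in> carrier_mat r c"
  shows "frob U V = (\<Sum>l<c. col U l \<bullet> col V l)"
  using assms unfolding frob_def
  by (subst sum.swap) (simp add: scalar_prod_def atLeast0LessThan)

section \<open>Positive semidefinite matrices\<close>

lemma psd_carrier: "psd n M \<Longrightarrow> M \<in> carrier_mat n n"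
  unfolding psd_def sym_mat_def by simp

lemma sym_mat_scalar_prod_commute:
  assumes "sym_mat n M" "v \<in> carrier_vec n" "w \<in> carrier_vec n"
  shows "v \<bullet> (M *\<^sub>v w) = w \<bullet> (M *\<^sub>v v)"
proof -
  have M: "M \<in> carrier_mat n n" and MT: "transpose_mat M = M"
    using assms(1) unfolding sym_mat_def by auto
  have "v \<bullet> (M *\<^sub>v w) = (M *\<^sub>v v) \<bullet> w"
    using transpose_vec_mult_scalar[OF M assms(3) assms(2)] MT by simp
  also have "\<dots> = w \<bullet> (M *\<^sub>v v)"
    using M assms by (intro comm_scalar_prod) auto
  finally show ?thesis .
qed

lemma quadratic_nonneg_discriminant:
  fixes a b c :: real
  assumes nonneg: "\<And>t. 0 \<le> a + 2 * t * b + t\<^sup>2 * c" and "0 \<le> c"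
  shows "b\<^sup>2 \<le> a * c"
proof (cases "c = 0")
  case True
  have "b = 0"
  proof (rule ccontr)
    assume "b \<noteq> 0"
    then have "a + 2 * (- (a + 1) / (2 * b)) * b = -1" by (simp add: field_simps)
    then show False using nonneg[of "- (a + 1) / (2 * b)"] True by simp
  qed
  then show ?thesis using nonneg[of 0] True by simp
next
  case False
  then have c: "0 < c" using \<open>0 \<le> c\<close> by simp
  have "0 \<le> a + 2 * (- b / c) * b + (- b / c)\<^sup>2 * c" by (rule nonneg)
  also have "\<dots> = a - b\<^sup>2 / c" using c by (simp add: field_simps power2_eq_square)
  finally have "b\<^sup>2 / c \<le> a" by simp
  then show ?thesis using c by (simp add: divide_le_eq mult.commute)
qed

lemma psd_cauchy_schwarz:
  assumes M: "psd n M" and v: "v \<in> carrier_vec n" and w: "w \<in> carrier_vec n"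
  shows "(v \<bullet> (M *\<^sub>v w))\<^sup>2 \<le> (v \<bullet> (M *\<^sub>v v)) * (w \<bullet> (M *\<^sub>v w))"
proof (rule quadratic_nonneg_discriminant)
  have Mc: "M \<in> carrier_mat n n" using M by (rule psd_carrier)
  have sym: "w \<bullet> (M *\<^sub>v v) = v \<bullet> (M *\<^sub>v w)"
    using M v w unfolding psd_def by (intro sym_mat_scalar_prod_commute) auto
  fix t :: real
  have "M *\<^sub>v (v + t \<cdot>\<^sub>v w) = M *\<^sub>v v + t \<cdot>\<^sub>v (M *\<^sub>v w)"
    using Mc v w by (simp add: mult_add_distrib_mat_vec[of M n n] mult_mat_vec[of M n n])
  then have "(v + t \<cdot>\<^sub>v w) \<bullet> (M *\<^sub>v (v + t \<cdot>\<^sub>v w))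
      = v \<bullet> (M *\<^sub>v v) + 2 * t * (v \<bullet> (M *\<^sub>v w)) + t\<^sup>2 * (w \<bullet> (M *\<^sub>v w))"
    using Mc v w sym
    by (simp add: add_scalar_prod_distrib[of _ n] scalar_prod_add_distrib[of _ n] distrib_left
        power2_eq_square)
  moreover have "0 \<le> (v + t \<cdot>\<^sub>v w) \<bullet> (M *\<^sub>v (v + t \<cdot>\<^sub>v w))"
    using M v w unfolding psd_def by simp
  ultimately show "0 \<le> v \<bullet> (M *\<^sub>v v) + 2 * t * (v \<bullet> (M *\<^sub>v w)) + t\<^sup>2 * (w \<bullet> (M *\<^sub>v w))"
    by simp
  show "0 \<le> w \<bullet> (M *\<^sub>v w)" using M w unfolding psd_def by simp
qed

lemma psd_quadratic_form_eq_0: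
  assumes M: "psd n M" and v: "v \<in> carrier_vec n" and "v \<bullet> (M *\<^sub>v v) = 0"
  shows "M *\<^sub>v v = 0\<^sub>v n"
proof (rule eq_vecI)
  have Mc: "M \<in> carrier_mat n n" using M by (rule psd_carrier)
  fix a assume "a < dim_vec (0\<^sub>v n :: real vec)"
  then have a: "a < n" by simp
  have "(unit_vec n a \<bullet> (M *\<^sub>v v))\<^sup>2 \<le> 0"
    using psd_cauchy_schwarz[OF M unit_vec_carrier v, of a] assms by simp
  moreover have "unit_vec n a \<bullet> (M *\<^sub>v v) = (M *\<^sub>v v) $ a"
    using Mc v a by (intro scalar_prod_left_unit) auto
  ultimately show "(M *\<^sub>v v) $ a = 0\<^sub>v n $ a" using a by simp
qed (use psd_carrier[OF M] in simp)

lemma psd_diag_nonneg: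
  assumes M: "psd n M" and i: "i < n"
  shows "0 \<le> M $$ (i, i)"
proof -
  have "0 \<le> unit_vec n i \<bullet> (M *\<^sub>v unit_vec n i)" using M unfolding psd_def by simp
  then show ?thesis using quadratic_form_unit_vec[OF psd_carrier[OF M] i] by simp
qed

lemma psd_diag_eq_0_imp_col_eq_0:
  assumes M: "psd n M" and i: "i < n" and "M $$ (i, i) = 0" and j: "j < n"
  shows "M $$ (j, i) = 0"
proof -
  have Mc: "M \<in> carrier_mat n n" using M by (rule psd_carrier)
  have "unit_vec n i \<bullet> (M *\<^sub>v unit_vec n i) = 0"
    using quadratic_form_unit_vec[OF Mc i] assms(3) by simp
  then have "M *\<^sub>v unit_vec n i = 0\<^sub>v n" by (rule psd_quadratic_form_eq_0[OF M unit_vec_carrier])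
  then have "col M i = 0\<^sub>v n" by (simp only: mult_mat_unit_vec[OF Mc i])
  moreover have "M $$ (j, i) = col M i $ j" using Mc i j by simp
  ultimately show ?thesis using j by simp
qed

lemma psd_frob_mult_transpose_eq_0:
  assumes S: "psd n S" and Y: "Y \<in> carrier_mat n k" and "frob S (Y * transpose_mat Y) = 0"
  shows "S * Y = 0\<^sub>m n k"
proof (rule mat_col_eqI)
  have Sc: "S \<in> carrier_mat n n" using S by (rule psd_carrier)
  have "frob (S * Y) Y = (\<Sum>l<k. col (S * Y) l \<bullet> col Y l)"
    by (rule frob_eq_sum_cols) (use Sc Y in auto)
  also have "\<dots> = (\<Sum>l<k. col Y l \<bullet> (S *\<^sub>v col Y l))"
  proof (intro sum.cong refl)
    fix l assume "l \<in> {..<k}"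
    then have "col (S * Y) l = S *\<^sub>v col Y l" by (intro col_mult2[OF Sc Y]) simp
    moreover have "S *\<^sub>v col Y l \<in> carrier_vec n" "col Y l \<in> carrier_vec n" using Sc Y by auto
    ultimately show "col (S * Y) l \<bullet> col Y l = col Y l \<bullet> (S *\<^sub>v col Y l)"
      by (simp add: comm_scalar_prod)
  qed
  finally have "(\<Sum>l<k. col Y l \<bullet> (S *\<^sub>v col Y l)) = 0"
    using assms(3) unfolding frob_mult_transpose_right[OF Sc Y Y] by simp
  moreover have "\<forall>l\<in>{..<k}. 0 \<le> col Y l \<bullet> (S *\<^sub>v col Y l)"
    using S Y unfolding psd_def by simp
  ultimately have forms: "\<forall>l\<in>{..<k}. col Y l \<bullet> (S *\<^sub>v col Y l) = 0"
    using sum_nonneg_eq_0_iff[OF finite_lessThan, of k "\<lambda>l. col Y l \<bullet> (S *\<^sub>v col Y l)"] by blast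
  show "col (S * Y) l = col (0\<^sub>m n k) l" if l: "l < dim_col (0\<^sub>m n k)" for l
  proof -
    have "col (S * Y) l = S *\<^sub>v col Y l" by (rule col_mult2[OF Sc Y]) (use l in simp)
    also have "\<dots> = 0\<^sub>v n"
      using psd_quadratic_form_eq_0[OF S _ forms[rule_format]] l Y by simp
    also have "\<dots> = col (0\<^sub>m n k) l" using l by simp
    finally show ?thesis .
  qed
qed (use psd_carrier[OF S] Y in auto)

section \<open>Pivoted Cholesky factorisation and rank\<close>

lemma psd_schur_complement_pivot:
  assumes X: "psd n X" and i: "i < n" and pos: "0 < X $$ (i, i)"
  defines "y \<equiv> vec n (\<lambda>a. X $$ (a, i) / sqrt (X $$ (i, i)))"
  shows "psd n (X - mat n n (\<lambda>(a, b). y $ a * y $ b))"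
  unfolding psd_def
proof (intro conjI ballI)
  have Xc: "X \<in> carrier_mat n n" using X by (rule psd_carrier)
  have Xsym: "X $$ (a, b) = X $$ (b, a)" if "a < n" "b < n" for a b
    using X that unfolding psd_def by (intro sym_mat_index) auto
  show "sym_mat n (X - mat n n (\<lambda>(a, b). y $ a * y $ b))"
    unfolding sym_mat_def using Xc by (auto intro!: eq_matI simp: Xsym)
  fix v :: "real vec" assume v: "v \<in> carrier_vec n"
  let ?e = "unit_vec n i"
  have y: "y \<in> carrier_vec n" by (simp add: y_def)
  have "mat n n (\<lambda>(a, b). y $ a * y $ b) *\<^sub>v v = (y \<bullet> v) \<cdot>\<^sub>v y"
    using y v by (intro eq_vecI) (auto simp: scalar_prod_def sum_distrib_left ac_simps)
  then have "v \<bullet> ((X - mat n n (\<lambda>(a, b). y $ a * y $ b)) *\<^sub>v v) = v \<bullet> (X *\<^sub>v v) - (v \<bullet> y)\<^sup>2"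
    using Xc v y
    by (simp add: minus_mult_distrib_mat_vec scalar_prod_minus_distrib[of _ n] comm_scalar_prod[of y n]
        power2_eq_square)
  moreover have "v \<bullet> y = (v \<bullet> (X *\<^sub>v ?e)) / sqrt (X $$ (i, i))"
    using Xc v i by (simp add: mult_mat_unit_vec y_def scalar_prod_def sum_divide_distrib)
  moreover have "(v \<bullet> (X *\<^sub>v ?e))\<^sup>2 \<le> (v \<bullet> (X *\<^sub>v v)) * X $$ (i, i)"
    using psd_cauchy_schwarz[OF X v unit_vec_carrier, of i] quadratic_form_unit_vec[OF Xc i] by simp
  ultimately show "0 \<le> v \<bullet> ((X - mat n n (\<lambda>(a, b). y $ a * y $ b)) *\<^sub>v v)"
    using pos by (simp add: power_divide pos_divide_le_eq)
qed

lemma schur_complement_pivot_diag: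
  assumes X: "psd n X" and i: "i < n" and pos: "0 < X $$ (i, i)"
  defines "y \<equiv> vec n (\<lambda>a. X $$ (a, i) / sqrt (X $$ (i, i)))"
  shows "(X - mat n n (\<lambda>(a, b). y $ a * y $ b)) $$ (i, i) = 0"
    and "{j. j < n \<and> (X - mat n n (\<lambda>(a, b). y $ a * y $ b)) $$ (j, j) \<noteq> 0}
      \<subset> {j. j < n \<and> X $$ (j, j) \<noteq> 0}"
proof -
  have Xc: "X \<in> carrier_mat n n" using X by (rule psd_carrier)
  have "y $ i * y $ i = X $$ (i, i)"
    using i pos by (simp add: y_def power_divide flip: power2_eq_square) (simp add: power2_eq_square)
  then show ii: "(X - mat n n (\<lambda>(a, b). y $ a * y $ b)) $$ (i, i) = 0" using Xc i by simp
  have "(X - mat n n (\<lambda>(a, b). y $ a * y $ b)) $$ (j, j) = 0" if j: "j < n" and "X $$ (j, j) = 0" for j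
  proof -
    have "X $$ (i, j) = 0" using psd_diag_eq_0_imp_col_eq_0[OF X j] that i by simp
    moreover have "X $$ (j, i) = X $$ (i, j)" using X i j unfolding psd_def by (intro sym_mat_index) auto
    ultimately have "X $$ (j, i) = 0" by simp
    then show ?thesis using Xc j \<open>X $$ (j, j) = 0\<close> by (simp add: y_def)
  qed
  then have "{j. j < n \<and> (X - mat n n (\<lambda>(a, b). y $ a * y $ b)) $$ (j, j) \<noteq> 0}
      \<subseteq> {j. j < n \<and> X $$ (j, j) \<noteq> 0}"
    by blast
  moreover have "i \<in> {j. j < n \<and> X $$ (j, j) \<noteq> 0}"
    and "i \<notin> {j. j < n \<and> (X - mat n n (\<lambda>(a, b). y $ a * y $ b)) $$ (j, j) \<noteq> 0}"
    using ii i pos by auto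
  ultimately show "{j. j < n \<and> (X - mat n n (\<lambda>(a, b). y $ a * y $ b)) $$ (j, j) \<noteq> 0}
      \<subset> {j. j < n \<and> X $$ (j, j) \<noteq> 0}"
    by blast
qed

text \<open>The pivot rows \<open>p 0, p 1, \<dots>\<close> of \<open>Z\<close> form a lower triangular block with nonzero diagonal,
  which certifies that the columns of \<open>Z\<close> are linearly independent.\<close>

definition column_pivots :: "'a :: zero mat \<Rightarrow> (nat \<Rightarrow> nat) \<Rightarrow> bool" where
  "column_pivots Z p \<longleftrightarrow> (\<forall>j<dim_col Z. p j < dim_row Z \<and> Z $$ (p j, j) \<noteq> 0 \<and>
     (\<forall>l. j < l \<and> l < dim_col Z \<longrightarrow> Z $$ (p j, l) = 0))"

definition prepend_col :: "'a vec \<Rightarrow> 'a mat \<Rightarrow> 'a mat" where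
  "prepend_col y Z = mat (dim_row Z) (Suc (dim_col Z)) (\<lambda>(a, l). if l = 0 then y $ a else Z $$ (a, l - 1))"

lemma prepend_col_carrier [simp]: "Z \<in> carrier_mat n k \<Longrightarrow> prepend_col y Z \<in> carrier_mat n (Suc k)"
  by (simp add: prepend_col_def)

lemma mult_transpose_prepend_col:
  fixes Z :: "'a :: comm_semiring_0 mat"
  assumes Z: "Z \<in> carrier_mat n k"
  shows "prepend_col y Z * transpose_mat (prepend_col y Z)
    = mat n n (\<lambda>(a, b). y $ a * y $ b) + Z * transpose_mat Z"
proof (rule eq_matI)
  fix a b assume "a < dim_row (mat n n (\<lambda>(a, b). y $ a * y $ b) + Z * transpose_mat Z)"
    and "b < dim_col (mat n n (\<lambda>(a, b). y $ a * y $ b) + Z * transpose_mat Z)"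
  then have a: "a < n" and b: "b < n" using Z by auto
  show "(prepend_col y Z * transpose_mat (prepend_col y Z)) $$ (a, b)
    = (mat n n (\<lambda>(a, b). y $ a * y $ b) + Z * transpose_mat Z) $$ (a, b)"
    using Z a b by (simp add: prepend_col_def scalar_prod_def atLeast0LessThan sum.lessThan_Suc_shift del: sum.lessThan_Suc)
qed (use Z in \<open>auto simp: prepend_col_def\<close>)

lemma column_pivots_prepend_col:
  assumes Z: "Z \<in> carrier_mat n k" and piv: "column_pivots Z p" and i: "i < n"
    and yi: "y $ i \<noteq> 0" and row_i: "\<forall>l<k. Z $$ (i, l) = 0"
  shows "column_pivots (prepend_col y Z) (\<lambda>j. if j = 0 then i else p (j - 1))"
    (is "column_pivots ?Z ?p")
  unfolding column_pivots_def
proof (intro allI impI)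
  fix j assume "j < dim_col ?Z"
  then have j: "j < Suc k" using Z by (simp add: prepend_col_def)
  show "?p j < dim_row ?Z \<and> ?Z $$ (?p j, j) \<noteq> 0 \<and>
      (\<forall>l. j < l \<and> l < dim_col ?Z \<longrightarrow> ?Z $$ (?p j, l) = 0)"
  proof (cases j)
    case 0
    then show ?thesis using Z i yi row_i by (auto simp: prepend_col_def)
  next
    case (Suc j')
    then have "j' < k" using j by simp
    then have "p j' < n" "Z $$ (p j', j') \<noteq> 0"
      and zeros: "\<forall>l. j' < l \<and> l < k \<longrightarrow> Z $$ (p j', l) = 0"
      using piv Z unfolding column_pivots_def by auto
    moreover have "Z $$ (p j', l - 1) = 0" if "Suc j' < l" "l < Suc k" for l
    proof -
      have "j' < l - 1" "l - 1 < k" using that by auto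
      then show ?thesis using zeros by blast
    qed
    ultimately show ?thesis using Z Suc \<open>j' < k\<close> by (auto simp: prepend_col_def)
  qed
qed

lemma mult_transpose_diag_eq_0:
  fixes Z :: "real mat"
  assumes Z: "Z \<in> carrier_mat n k" and a: "a < n" and "(Z * transpose_mat Z) $$ (a, a) = 0"
    and l: "l < k"
  shows "Z $$ (a, l) = 0"
proof -
  have "(\<Sum>l<k. (Z $$ (a, l))\<^sup>2) = 0"
    using assms index_mult_transpose_mat[OF Z Z a a] by (simp add: power2_eq_square)
  then show ?thesis using l by (simp add: sum_nonneg_eq_0_iff)
qed

lemma psd_pivoted_factorization:
  assumes "psd n X"
  shows "\<exists>k Z p. Z \<in> carrier_mat n k \<and> X = Z * transpose_mat Z \<and> column_pivots Z p"
  using assms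
proof (induction "card {i. i < n \<and> X $$ (i, i) \<noteq> 0}" arbitrary: X rule: less_induct)
  case less
  have X: "psd n X" and Xc: "X \<in> carrier_mat n n" using less.prems psd_carrier by auto
  show ?case
  proof (cases "\<exists>i<n. X $$ (i, i) \<noteq> 0")
    case False
    have "X $$ (a, b) = 0" if "a < n" "b < n" for a b
      using psd_diag_eq_0_imp_col_eq_0[OF X that(2) _ that(1)] False that(2) by blast
    then have "X = 0\<^sub>m n 0 * transpose_mat (0\<^sub>m n 0)"
      using Xc by (intro eq_matI) (simp_all add: scalar_prod_def)
    then show ?thesis by (intro exI[of _ 0] exI[of _ "0\<^sub>m n 0"]) (auto simp: column_pivots_def)
  next
    case True
    then obtain i where i: "i < n" and "X $$ (i, i) \<noteq> 0" by blast
    then have pos: "0 < X $$ (i, i)" using psd_diag_nonneg[OF X i] by simp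
    define y where "y = vec n (\<lambda>a. X $$ (a, i) / sqrt (X $$ (i, i)))"
    define X' where "X' = X - mat n n (\<lambda>(a, b). y $ a * y $ b)"
    have fewer: "card {j. j < n \<and> X' $$ (j, j) \<noteq> 0} < card {j. j < n \<and> X $$ (j, j) \<noteq> 0}"
      unfolding X'_def y_def by (rule psubset_card_mono[OF _ schur_complement_pivot_diag(2)[OF X i pos]]) simp
    have X': "psd n X'" unfolding X'_def y_def by (rule psd_schur_complement_pivot[OF X i pos])
    obtain k Z p where Z: "Z \<in> carrier_mat n k" and X'Z: "X' = Z * transpose_mat Z"
      and piv: "column_pivots Z p"
      using less.hyps[OF fewer X'] by blast
    have "X' $$ (i, i) = 0" unfolding X'_def y_def by (rule schur_complement_pivot_diag(1)[OF X i pos])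
    then have "\<forall>l<k. Z $$ (i, l) = 0" using mult_transpose_diag_eq_0[OF Z i] X'Z by blast
    moreover have "y $ i \<noteq> 0" using i pos by (simp add: y_def)
    ultimately have "column_pivots (prepend_col y Z) (\<lambda>j. if j = 0 then i else p (j - 1))"
      using column_pivots_prepend_col[OF Z piv i] by blast
    moreover have "X = prepend_col y Z * transpose_mat (prepend_col y Z)"
      unfolding mult_transpose_prepend_col[OF Z] X'Z[symmetric] X'_def using Xc by auto
    ultimately show ?thesis using prepend_col_carrier[OF Z] by blast
  qed
qed

lemma rank_ge_injective_subcols:
  fixes X P :: "real mat"
  assumes X: "X \<in> carrier_mat n nc" and P: "P \<in> carrier_mat n k"
    and cols: "set (cols P) \<subseteq> set (cols X)"
    and inj: "\<And>c. c \<in> carrier_vec k \<Longrightarrow> P *\<^sub>v c = 0\<^sub>v n \<Longrightarrow> c = 0\<^sub>v k"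
  shows "k \<le> vec_space.rank n X"
proof -
  interpret vec_space "TYPE(real)" n .
  have dist: "distinct (cols P)"
  proof (rule ccontr)
    assume "\<not> distinct (cols P)"
    then obtain i j where i: "i < k" and j: "j < k" and "i \<noteq> j" and eq: "col P i = col P j"
      using P by (auto simp: distinct_conv_nth)
    let ?c = "unit_vec k i - unit_vec k j :: real vec"
    have "P *\<^sub>v ?c = col P i - col P j"
      using P i j by (simp add: mult_minus_distrib_mat_vec mult_mat_unit_vec)
    also have "\<dots> = 0\<^sub>v n" unfolding eq using P by (intro eq_vecI) auto
    finally have "P *\<^sub>v ?c = 0\<^sub>v n" .
    from inj[OF _ this] have "?c = 0\<^sub>v k" by simp
    then have "?c $ i = 0" using i by simp
    then show False using i j \<open>i \<noteq> j\<close> by simp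
  qed
  have "lin_indpt (set (cols P))"
    using lin_depE[OF P _ dist] inj by metis
  then have "card (set (cols P)) \<le> rank X" by (rule rank_ge_card_indpt[OF X cols])
  then show ?thesis using distinct_card[OF dist] P by simp
qed

lemma det_column_pivots_block:
  fixes Z :: "'a :: idom mat"
  assumes Z: "Z \<in> carrier_mat n k" and piv: "column_pivots Z p"
  shows "det (mat k k (\<lambda>(j, l). Z $$ (p j, l))) \<noteq> 0"
proof -
  let ?W = "mat k k (\<lambda>(j, l). Z $$ (p j, l))"
  have "det ?W = prod_list (diag_mat ?W)"
    by (rule det_lower_triangular[of k]) (use piv Z in \<open>auto simp: column_pivots_def\<close>)
  also have "\<dots> = (\<Prod>j = 0..<k. Z $$ (p j, j))" by (simp add: prod_list_diag_prod)
  also have "\<dots> \<noteq> 0" using piv Z by (auto simp: column_pivots_def prod_zero_iff)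
  finally show ?thesis .
qed

lemma rank_mult_transpose_ge_pivots:
  fixes Z :: "real mat"
  assumes Z: "Z \<in> carrier_mat n k" and piv: "column_pivots Z p"
  shows "k \<le> vec_space.rank n (Z * transpose_mat Z)"
proof -
  \<comment> \<open>The columns of \<open>P\<close> are the pivot columns of \<open>Z Z\<^sup>T\<close>, and \<open>P\<close> is injective because
    its pivot rows form the invertible matrix \<open>W W\<^sup>T\<close>.\<close>
  define W where "W = mat k k (\<lambda>(j, l). Z $$ (p j, l))"
  define P where "P = Z * transpose_mat W"
  have W: "W \<in> carrier_mat k k" and P: "P \<in> carrier_mat n k" using Z by (auto simp: W_def P_def)
  have p: "p j < n" if "j < k" for j using piv Z that by (auto simp: column_pivots_def)
  have "det W \<noteq> 0" unfolding W_def by (rule det_column_pivots_block[OF Z piv])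
  then have "det (W * transpose_mat W) \<noteq> 0"
    using det_mult[of W k "transpose_mat W"] det_transpose[OF W] W by simp
  then have WW_inj: "c = 0\<^sub>v k" if "c \<in> carrier_vec k" "W * transpose_mat W *\<^sub>v c = 0\<^sub>v k" for c
    using det_0_iff_vec_prod_zero[of "W * transpose_mat W" k] W that by auto
  have P_entry: "P $$ (a, j) = (Z * transpose_mat Z) $$ (a, p j)" if "a < n" "j < k" for a j
    using Z W that p by (simp add: P_def W_def scalar_prod_def atLeast0LessThan)
  have P_rows: "row P (p j) = row (W * transpose_mat W) j" if "j < k" for j
    using Z W that p by (intro eq_vecI) (simp_all add: P_def W_def scalar_prod_def atLeast0LessThan)
  show ?thesis
  proof (rule rank_ge_injective_subcols[OF _ P])
    show "Z * transpose_mat Z \<in> carrier_mat n n" using Z by simp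
    show "set (cols P) \<subseteq> set (cols (Z * transpose_mat Z))"
    proof
      fix v assume "v \<in> set (cols P)"
      then obtain j where j: "j < k" and v: "v = col P j" using P by (auto simp: in_set_conv_nth)
      have "v = col (Z * transpose_mat Z) (p j)" using P_entry j Z P p[OF j] unfolding v by (intro eq_vecI) auto
      then show "v \<in> set (cols (Z * transpose_mat Z))" using p[OF j] Z by (auto simp: in_set_conv_nth)
    qed
    fix c :: "real vec" assume c: "c \<in> carrier_vec k" and Pc: "P *\<^sub>v c = 0\<^sub>v n"
    have "(W * transpose_mat W *\<^sub>v c) $ j = 0" if j: "j < k" for j
    proof -
      have "(W * transpose_mat W *\<^sub>v c) $ j = row P (p j) \<bullet> c" using P_rows[OF j] W j by simp
      also have "\<dots> = (P *\<^sub>v c) $ p j" using P p[OF j] by simp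
      finally show ?thesis using Pc p[OF j] by simp
    qed
    then have "W * transpose_mat W *\<^sub>v c = 0\<^sub>v k" using W by (intro eq_vecI) auto
    then show "c = 0\<^sub>v k" by (rule WW_inj[OF c])
  qed
qed

lemma psd_factor_rank:
  assumes "psd n X"
  shows "\<exists>Y \<in> carrier_mat n (vec_space.rank n X). X = Y * transpose_mat Y"
proof -
  obtain k Z p where Z: "Z \<in> carrier_mat n k" and XZ: "X = Z * transpose_mat Z" and piv: "column_pivots Z p"
    using psd_pivoted_factorization[OF assms] by blast
  define r where "r = vec_space.rank n X"
  have kr: "k \<le> r" unfolding r_def XZ by (rule rank_mult_transpose_ge_pivots[OF Z piv])
  define Y where "Y = mat n r (\<lambda>(a, l). if l < k then Z $$ (a, l) else 0)"
  have Y: "Y \<in> carrier_mat n r" by (simp add: Y_def)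
  have "Y * transpose_mat Y = Z * transpose_mat Z"
  proof (rule eq_matI)
    fix a b assume "a < dim_row (Z * transpose_mat Z)" "b < dim_col (Z * transpose_mat Z)"
    then have a: "a < n" and b: "b < n" using Z by auto
    have "(\<Sum>l<r. Y $$ (a, l) * Y $$ (b, l)) = (\<Sum>l<k. Y $$ (a, l) * Y $$ (b, l))"
      by (rule sum.mono_neutral_right) (use kr in \<open>auto simp: Y_def a b\<close>)
    also have "\<dots> = (\<Sum>l<k. Z $$ (a, l) * Z $$ (b, l))"
      by (rule sum.cong) (use kr in \<open>auto simp: Y_def a b\<close>)
    finally show "(Y * transpose_mat Y) $$ (a, b) = (Z * transpose_mat Z) $$ (a, b)"
      using index_mult_transpose_mat[OF Y Y a b] index_mult_transpose_mat[OF Z Z a b] by simp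
  qed (use Y Z in auto)
  then have "X = Y * transpose_mat Y" using XZ by simp
  then show ?thesis using Y unfolding r_def by blast
qed

section \<open>The multiplier estimate\<close>

lemma Astar_carrier: "Astar n m A \<nu> \<in> carrier_mat n n"
  by (simp add: Astar_def)

lemma index_Astar_mult:
  assumes A: "\<forall>i<m. A i \<in> carrier_mat n n" and Y: "Y \<in> carrier_mat n k" and a: "a < n" and l: "l < k"
  shows "(Astar n m A \<nu> * Y) $$ (a, l) = (\<Sum>i<m. \<nu> $ i * (A i * Y) $$ (a, l))"
proof -
  have "(Astar n m A \<nu> * Y) $$ (a, l) = (\<Sum>c<n. \<Sum>i<m. \<nu> $ i * (A i $$ (a, c) * Y $$ (c, l)))"
    using Y a l by (simp add: Astar_def scalar_prod_def atLeast0LessThan sum_distrib_right mult.assoc)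
  also have "\<dots> = (\<Sum>i<m. \<Sum>c<n. \<nu> $ i * (A i $$ (a, c) * Y $$ (c, l)))"
    by (rule sum.swap)
  also have "\<dots> = (\<Sum>i<m. \<nu> $ i * (A i * Y) $$ (a, l))"
  proof (intro sum.cong refl)
    fix i assume "i \<in> {..<m}"
    then have "A i \<in> carrier_mat n n" using A by simp
    then show "(\<Sum>c<n. \<nu> $ i * (A i $$ (a, c) * Y $$ (c, l))) = \<nu> $ i * (A i * Y) $$ (a, l)"
      using Y a l by (simp add: scalar_prod_def atLeast0LessThan sum_distrib_left)
  qed
  finally show ?thesis .
qed

lemma frob_minus_Astar:
  assumes A: "\<forall>i<m. A i \<in> carrier_mat n n" and C: "C \<in> carrier_mat n n"
    and X: "X \<in> carrier_mat n n" and \<nu>: "\<nu> \<in> carrier_vec m"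
  shows "frob (C - Astar n m A \<nu>) X = frob C X - Aop m A X \<bullet> \<nu>"
proof -
  have "frob (Astar n m A \<nu>) X = frob X (Astar n m A \<nu>)"
    using X by (intro frob_commute[OF Astar_carrier])
  also have "\<dots> = (\<Sum>i<m. \<nu> $ i * frob X (A i))"
    by (rule frob_lincomb_right[OF X]) (simp add: Astar_def)
  also have "\<dots> = Aop m A X \<bullet> \<nu>"
    using A X \<nu> by (simp add: Aop_def scalar_prod_def atLeast0LessThan frob_commute[of X n n] mult.commute)
  finally show ?thesis using frob_diff_left[OF C Astar_carrier] by simp
qed

lemma Aop_mult_transpose_eq_gram:
  assumes A: "\<forall>i<m. A i \<in> carrier_mat n n" and Y: "Y \<in> carrier_mat n k" and C: "C \<in> carrier_mat n n"
    and CY: "C * Y = Astar n m A \<nu> * Y" and \<nu>: "\<nu> \<in> carrier_vec m"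
  shows "Aop m A (C * Y * transpose_mat Y) = gram m A Y *\<^sub>v \<nu>"
proof (rule eq_vecI)
  fix j assume "j < dim_vec (gram m A Y *\<^sub>v \<nu>)"
  then have j: "j < m" by (simp add: gram_def)
  have AjY: "A j * Y \<in> carrier_mat n k" using A Y j by auto
  have "Aop m A (C * Y * transpose_mat Y) $ j = frob (A j) (C * Y * transpose_mat Y)"
    using j by (simp add: Aop_def)
  also have "\<dots> = frob (A j * Y) (C * Y)"
    by (rule frob_mult_transpose_right) (use A C Y j in auto)
  also have "\<dots> = frob (A j * Y) (Astar n m A \<nu> * Y)"
    unfolding CY ..
  also have "\<dots> = (\<Sum>i<m. \<nu> $ i * frob (A j * Y) (A i * Y))"
    by (rule frob_lincomb_right[OF AjY]) (simp add: index_Astar_mult[OF A Y])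
  also have "\<dots> = (gram m A Y *\<^sub>v \<nu>) $ j"
    using j \<nu> by (simp add: gram_def scalar_prod_def atLeast0LessThan mult.commute)
  finally show "Aop m A (C * Y * transpose_mat Y) $ j = (gram m A Y *\<^sub>v \<nu>) $ j" .
qed (simp add: Aop_def gram_def)

lemma gram_mult_vec_eq_0_imp_eq_0:
  assumes A: "\<forall>i<m. A i \<in> carrier_mat n n" and Y: "Y \<in> carrier_mat n k"
    and indep: "lin_indep_mats m n k (\<lambda>i. A i * Y)"
    and c: "c \<in> carrier_vec m" and Gc: "gram m A Y *\<^sub>v c = 0\<^sub>v m"
  shows "c = 0\<^sub>v m"
proof -
  define M where "M = mat n k (\<lambda>(a, l). \<Sum>i<m. c $ i * (A i * Y) $$ (a, l))"
  have Mc: "M \<in> carrier_mat n k" by (simp add: M_def)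
  have AY: "A i * Y \<in> carrier_mat n k" if "i < m" for i using A Y that by auto
  have "frob M M = (\<Sum>j<m. c $ j * frob M (A j * Y))"
    by (rule frob_lincomb_right[OF Mc]) (simp add: M_def)
  also have "\<dots> = (\<Sum>j<m. c $ j * (\<Sum>i<m. c $ i * frob (A j * Y) (A i * Y)))"
  proof (intro sum.cong refl)
    fix j assume "j \<in> {..<m}"
    then have "frob M (A j * Y) = frob (A j * Y) M" using frob_commute[OF Mc AY] by simp
    also have "\<dots> = (\<Sum>i<m. c $ i * frob (A j * Y) (A i * Y))"
      using \<open>j \<in> {..<m}\<close> by (intro frob_lincomb_right[OF AY]) (auto simp: M_def)
    finally show "c $ j * frob M (A j * Y) = c $ j * (\<Sum>i<m. c $ i * frob (A j * Y) (A i * Y))"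
      by simp
  qed
  also have "\<dots> = c \<bullet> (gram m A Y *\<^sub>v c)"
    using c by (simp add: gram_def scalar_prod_def atLeast0LessThan mult.commute)
  also have "\<dots> = 0" using Gc c by simp
  finally have "M = 0\<^sub>m n k" by (rule frob_self_eq_0[OF Mc])
  have "(\<Sum>i<m. c $ i * (A i * Y) $$ (a, l)) = 0" if "a < n" "l < k" for a l
  proof -
    have "M $$ (a, l) = 0" using \<open>M = 0\<^sub>m n k\<close> that by simp
    then show ?thesis using that by (simp add: M_def)
  qed
  then have "\<forall>i<m. c $ i = 0" using indep unfolding lin_indep_mats_def by blast
  then show ?thesis using c by (intro eq_vecI) auto
qed

lemma pinv_eqI:
  assumes G: "G \<in> carrier_mat m m" and B: "B \<in> carrier_mat m m"
    and BG: "B * G = 1\<^sub>m m" and GB: "G * B = 1\<^sub>m m"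
  shows "pinv G = B"
  unfolding pinv_def
proof (rule the_equality)
  show "B \<in> carrier_mat (dim_col G) (dim_row G) \<and> G * B * G = G \<and> B * G * B = B \<and>
      transpose_mat (G * B) = G * B \<and> transpose_mat (B * G) = B * G"
    using G B BG GB by simp
  fix P assume "P \<in> carrier_mat (dim_col G) (dim_row G) \<and> G * P * G = G \<and> P * G * P = P \<and>
      transpose_mat (G * P) = G * P \<and> transpose_mat (P * G) = P * G"
  then have P: "P \<in> carrier_mat m m" and GPG: "G * P * G = G" using G by auto
  have "P = (B * G) * P * (G * B)" using P BG GB by simp
  also have "\<dots> = B * (G * P * G) * B"
    using P B G by (simp add: assoc_mult_mat[of _ m m _ m _ m])
  also have "\<dots> = B" using GPG BG B G by (simp add: assoc_mult_mat[of _ m m _ m _ m])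
  finally show "P = B" .
qed

lemma mu_eq_dual_multiplier:
  assumes A: "\<forall>i<m. A i \<in> carrier_mat n n" and Y: "Y \<in> carrier_mat n k" and C: "C \<in> carrier_mat n n"
    and slack: "(C - Astar n m A \<nu>) * Y = 0\<^sub>m n k" and \<nu>: "\<nu> \<in> carrier_vec m"
    and indep: "lin_indep_mats m n k (\<lambda>i. A i * Y)"
  shows "mu m A C Y = \<nu>"
proof -
  have CY: "C * Y = Astar n m A \<nu> * Y"
    using slack minus_mult_distrib_mat[OF C Astar_carrier Y]
      minus_mat_eq_0_iff[OF mult_carrier_mat[OF C Y] mult_carrier_mat[OF Astar_carrier Y]] by simp
  let ?G = "gram m A Y"
  have G: "?G \<in> carrier_mat m m" by (simp add: gram_def)
  have "det ?G \<noteq> 0"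
    using gram_mult_vec_eq_0_imp_eq_0[OF A Y indep] det_0_iff_vec_prod_zero[OF G] by blast
  then obtain B where B: "B \<in> carrier_mat m m" and BG: "B * ?G = 1\<^sub>m m" and GB: "?G * B = 1\<^sub>m m"
    using det_non_zero_imp_unit[OF G, of "()"] by (auto simp: Units_def ring_mat_def)
  have "mu m A C Y = B *\<^sub>v (?G *\<^sub>v \<nu>)"
    unfolding mu_def pinv_eqI[OF G B BG GB] Aop_mult_transpose_eq_gram[OF A Y C CY \<nu>] ..
  also have "\<dots> = \<nu>"
    using B G BG \<nu> by (simp flip: assoc_mult_mat_vec)
  finally show ?thesis .
qed

theorem proposition6:
  fixes n m :: nat and A :: "nat \<Rightarrow> real mat" and b :: "real vec"
    and C X :: "real mat"
  assumes A_sym: "\<forall>i<m. sym_mat n (A i)"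
    and b_dim: "b \<in> carrier_vec m"
    and C_sym: "sym_mat n C"
    and X_feas: "feasible n m A b X"
    and X_opt: "\<forall>X'. feasible n m A b X' \<longrightarrow> frob C X \<le> frob C X'"
    and strong_duality: "\<exists>\<nu>. dual_feasible n m A C \<nu> \<and>
           (\<forall>\<nu>'. dual_feasible n m A C \<nu>' \<longrightarrow> b \<bullet> \<nu>' \<le> b \<bullet> \<nu>) \<and>
           b \<bullet> \<nu> = frob C X"
    and assm1a: "assumption1a n m A b (vec_space.rank n X)"
  shows "(\<exists>Y \<in> carrier_mat n (vec_space.rank n X). X = Y * transpose_mat Y) \<and>
         (\<forall>Y \<in> carrier_mat n (vec_space.rank n X). X = Y * transpose_mat Y \<longrightarrow>
            psd n (Smat n m A C Y) \<and> frob (Smat n m A C Y) X = 0)"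
proof -
  have X: "psd n X" and AX: "Aop m A X = b" using X_feas unfolding feasible_def by auto
  have A: "\<forall>i<m. A i \<in> carrier_mat n n" and C: "C \<in> carrier_mat n n"
    using A_sym C_sym unfolding sym_mat_def by auto
  obtain \<nu> where \<nu>: "\<nu> \<in> carrier_vec m" and S: "psd n (C - Astar n m A \<nu>)"
    and gap: "b \<bullet> \<nu> = frob C X"
    using strong_duality unfolding dual_feasible_def by blast
  have slack: "frob (C - Astar n m A \<nu>) X = 0"
    using frob_minus_Astar[OF A C psd_carrier[OF X] \<nu>] AX gap by simp
  have "psd n (Smat n m A C Y) \<and> frob (Smat n m A C Y) X = 0"
    if Y: "Y \<in> carrier_mat n (vec_space.rank n X)" and XY: "X = Y * transpose_mat Y" for Y
  proof -
    have "(C - Astar n m A \<nu>) * Y = 0\<^sub>m n (vec_space.rank n X)"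
      using psd_frob_mult_transpose_eq_0[OF S Y] slack XY by simp
    moreover have "lin_indep_mats m n (vec_space.rank n X) (\<lambda>i. A i * Y)"
      using assm1a Y AX XY unfolding assumption1a_def by auto
    ultimately have "mu m A C Y = \<nu>" by (rule mu_eq_dual_multiplier[OF A Y C _ \<nu>])
    then show ?thesis using S slack unfolding Smat_def by simp
  qed
  then show ?thesis using psd_factor_rank[OF X] by blast
qed

end
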